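(* Let $\mathcal{A}$ be a probabilistic automaton with state set $Q$, and let $(u_n)_{n\in\mathbb{N}}$ and $(v_n)_{n\in\mathbb{N}}$ be sequences of words that reify limit-words $\mathbf{u}$ and $\mathbf{v}$ respectively. Then: (1) the sequence $(u_n\cdot v_n)_{n\in\mathbb{N}}$ reifies $\mathbf{u}\cdot\mathbf{v}$; (2) if $\mathbf{u}$ is idempotent, then there exists an increasing function $f:\mathbb{N}\to\mathbb{N}$ such that for every increasing function $g:\mathbb{N}\to\mathbb{N}$ with $g\ge f$ (pointwise), the sequence $(u_{g(n)}^{\,n})_{n\in\mathbb{N}}$ reifies $\mathbf{u}^\sharp$.
   Context: Fix a finite alphabet $A$. A probabilistic automaton is $\mathcal{A}=(Q,q_0,\Delta,F)$ with $Q$ finite, $q_0\in Q$, $F\subseteq Q$ and $\Delta: Q\times A\to\mathcal{D}(Q)$. For $a\in A$ let $M_a(s,t)=\Delta(s,a)(t)$, for $u=a_0\cdots a_{n-1}$ let $M_u=M_{a_0}\cdots M_{a_{n-1}}$ (identity for the empty word), and $\mathbb{P}_{\mathcal{A}}(s\xrightarrow{u}t)=M_u(s,t)$; $u^n$ denotes $u$ concatenated $n$ times. A limit-word is a map $\mathbf{u}:Q\times Q\to\{0,1\}$ such that every $s$ has some $t$ with $\mathbf{u}(s,t)=1$. Concatenation: $(\mathbf{u}\cdot\mathbf{v})(s,t)=1$ iff there is $q$ with $\mathbf{u}(s,q)=\mathbf{v}(q,t)=1$. $\mathbf{u}$ is idempotent if $\mathbf{u}\cdot\mathbf{u}=\mathbf{u}$;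 for idempotent $\mathbf{u}$, $s$ is $\mathbf{u}$-recurrent if for all $t$, $\mathbf{u}(s,t)=1\Rightarrow\mathbf{u}(t,s)=1$, and $\mathbf{u}^\sharp(s,t)=1$ iff $\mathbf{u}(s,t)=1$ and $t$ is $\mathbf{u}$-recurrent. A sequence of words $(w_n)_{n}$ reifies a limit-word $\mathbf{w}$ if for all states $s,t$ the sequence $\mathbb{P}_{\mathcal{A}}(s\xrightarrow{w_n}t)$ converges and $\mathbf{w}(s,t)=1\iff\lim_n\mathbb{P}_{\mathcal{A}}(s\xrightarrow{w_n}t)>0$. *)

theory Defs
  imports "HOL-Probability.Probability_Mass_Function"
begin

record ('s, 'a) prob_automaton =
  init :: 's
  trans :: "'s \<Rightarrow> 'a \<Rightarrow> 's pmf"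
  final :: "'s set"

text \<open>P_A(s --u--> t) = M_u(s,t), with M_u the product of the letter matrices.\<close>
fun path_prob :: "('s::finite, 'a) prob_automaton \<Rightarrow> 's \<Rightarrow> 'a list \<Rightarrow> 's \<Rightarrow> real" where
  "path_prob A s [] t = (if s = t then 1 else 0)"
| "path_prob A s (a # w) t = (\<Sum>q\<in>UNIV. pmf (trans A s a) q * path_prob A q w t)"

definition word_pow :: "'a list \<Rightarrow> nat \<Rightarrow> 'a list" where
  "word_pow u n = concat (replicate n u)"

type_synonym 's limit_word = "'s \<Rightarrow> 's \<Rightarrow> bool"

definition is_limit_word :: "'s limit_word \<Rightarrow> bool" where
  "is_limit_word u \<longleftrightarrow> (\<forall>s. \<exists>t. u s t)"

definition lw_concat :: "'s limit_word \<Rightarrow> 's limit_word \<Rightarrow> 's limit_word" where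
  "lw_concat u v = (\<lambda>s t. \<exists>q. u s q \<and> v q t)"

definition lw_idempotent :: "'s limit_word \<Rightarrow> bool" where
  "lw_idempotent u \<longleftrightarrow> lw_concat u u = u"

definition lw_recurrent :: "'s limit_word \<Rightarrow> 's \<Rightarrow> bool" where
  "lw_recurrent u s \<longleftrightarrow> (\<forall>t. u s t \<longrightarrow> u t s)"

definition lw_sharp :: "'s limit_word \<Rightarrow> 's limit_word" where
  "lw_sharp u = (\<lambda>s t. u s t \<and> lw_recurrent u t)"

definition reifies :: "('s::finite, 'a) prob_automaton \<Rightarrow> (nat \<Rightarrow> 'a list) \<Rightarrow> 's limit_word \<Rightarrow> bool" where
  "reifies A w lw \<longleftrightarrow>
     (\<forall>s t. convergent (\<lambda>n. path_prob A s (w n) t) \<and>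
            (lw s t \<longleftrightarrow> lim (\<lambda>n. path_prob A s (w n) t) > 0))"

end

theory Submission
  imports Defs
begin

text \<open>Path probabilities multiply like matrices, so (1) is the continuity of the product of
  the limit matrices, whose support is the composite of the supports.

  For (2), let \<open>M\<close> be the limit of the matrices of \<open>u\<^sub>n\<close>: it is stochastic with support \<open>u\<close>.
  Idempotence makes \<open>u\<close> transitive, so the walk of \<open>M\<close> leaves the transient states
  geometrically fast, and inside the class of a recurrent state all entries of \<open>M\<close> are
  positive, so that Doeblin's contraction makes the powers \<open>M\<^sup>n\<close> converge. The limit at \<open>(s, t)\<close>
  is positive exactly when \<open>t\<close> is recurrent and \<open>u s t\<close>, i.e. when \<open>u\<^sup>\<sharp> s t\<close>. Finally, \<open>n\<close>-th
  powers of stochastic matrices move by at most \<open>n\<close> times the row distance of the matrices, so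
  \<open>u\<^bsub>g(n)\<^esub>\<^sup>n\<close> follows \<open>M\<^sup>n\<close> once \<open>g(n)\<close> is large enough for \<open>u\<^bsub>g(n)\<^esub>\<close> to be within
  \<open>1/(n+1)\<^sup>2\<close> of \<open>M\<close>.\<close>

section \<open>Finite sums and sequences\<close>

lemma sum_pos_iff_ex_pos:
  fixes f :: "'a \<Rightarrow> 'b::ordered_comm_monoid_add"
  assumes "finite S" and "\<And>q. q \<in> S \<Longrightarrow> 0 \<le> f q"
  shows "0 < sum f S \<longleftrightarrow> (\<exists>q\<in>S. 0 < f q)"
proof -
  have "sum f S = 0 \<longleftrightarrow> (\<forall>q\<in>S. f q = 0)"
    using assms by (simp add: sum_nonneg_eq_0_iff)
  moreover have "0 \<le> sum f S"
    using assms(2) by (rule sum_nonneg)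
  ultimately show ?thesis
    using assms(2) by (auto simp: order.strict_iff_order)
qed

lemma nonneg_mult_pos_iff:
  fixes a b :: real
  assumes "0 \<le> a" and "0 \<le> b"
  shows "0 < a * b \<longleftrightarrow> 0 < a \<and> 0 < b"
  using assms by (auto simp: zero_less_mult_iff order.strict_iff_order)

lemma abs_sum_weighted_le:
  fixes w x :: "'a \<Rightarrow> real"
  assumes "\<And>q. q \<in> S \<Longrightarrow> 0 \<le> w q"
  shows "\<bar>\<Sum>q\<in>S. w q * x q\<bar> \<le> (\<Sum>q\<in>S. w q * \<bar>x q\<bar>)"
  using sum_abs[of "\<lambda>q. w q * x q" S] assms by (simp add: abs_mult)

lemma weighted_average_bounds:
  fixes w x :: "'a \<Rightarrow> real"
  assumes "finite C" and w: "\<And>q. q \<in> C \<Longrightarrow> 0 \<le> w q" "sum w C = 1"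
    and x: "\<And>q. q \<in> C \<Longrightarrow> lo \<le> x q" "\<And>q. q \<in> C \<Longrightarrow> x q \<le> hi"
    and lo: "qlo \<in> C" "x qlo = lo" "e \<le> w qlo"
    and hi: "qhi \<in> C" "x qhi = hi" "e \<le> w qhi"
  shows "lo + e * (hi - lo) \<le> (\<Sum>q\<in>C. w q * x q)"
    and "(\<Sum>q\<in>C. w q * x q) \<le> hi - e * (hi - lo)"
proof -
  have "0 \<le> hi - lo"
    using x lo(1) by force
  have "e * (hi - lo) \<le> w qhi * (x qhi - lo)"
    using hi \<open>0 \<le> hi - lo\<close> by (simp add: mult_right_mono)
  also have "\<dots> \<le> (\<Sum>q\<in>C. w q * (x q - lo))"
    by (rule member_le_sum) (use assms in \<open>auto intro!: mult_nonneg_nonneg\<close>)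
  also have "\<dots> = (\<Sum>q\<in>C. w q * x q) - lo"
    using w(2) by (simp add: algebra_simps sum_subtractf sum_distrib_left[symmetric] sum_distrib_right[symmetric])
  finally show "lo + e * (hi - lo) \<le> (\<Sum>q\<in>C. w q * x q)"
    by simp
  have "e * (hi - lo) \<le> w qlo * (hi - x qlo)"
    using lo \<open>0 \<le> hi - lo\<close> by (simp add: mult_right_mono)
  also have "\<dots> \<le> (\<Sum>q\<in>C. w q * (hi - x q))"
    by (rule member_le_sum) (use assms in \<open>auto intro!: mult_nonneg_nonneg\<close>)
  also have "\<dots> = hi - (\<Sum>q\<in>C. w q * x q)"
    using w(2) by (simp add: algebra_simps sum_subtractf sum_distrib_left[symmetric] sum_distrib_right[symmetric])
  finally show "(\<Sum>q\<in>C. w q * x q) \<le> hi - e * (hi - lo)"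
    by simp
qed

lemma strict_mono_eventually_bound:
  assumes "\<And>n. eventually (Q n) sequentially"
  obtains f :: "nat \<Rightarrow> nat" where "strict_mono f" "\<And>n k. f n \<le> k \<Longrightarrow> Q n k"
proof -
  have "\<forall>n. \<exists>N. \<forall>k\<ge>N. Q n k"
    using assms by (simp add: eventually_sequentially)
  then obtain K where K: "\<forall>n. \<forall>k\<ge>K n. Q n k"
    by (rule choice[THEN exE])
  define f where "f n = n + (\<Sum>i\<le>n. K i)" for n
  show thesis
  proof
    show "strict_mono f"
      unfolding strict_mono_Suc_iff f_def by simp
    fix n k
    assume "f n \<le> k"
    moreover have "K n \<le> f n"
      using member_le_sum[of n "{..n}" K] by (simp add: f_def)
    ultimately show "Q n k"
      using K by simp
  qed
qed

section \<open>Stochastic matrices\<close>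

definition stochastic :: "('s::finite \<Rightarrow> 's \<Rightarrow> real) \<Rightarrow> bool" where
  "stochastic M \<longleftrightarrow> (\<forall>s t. 0 \<le> M s t) \<and> (\<forall>s. (\<Sum>t\<in>UNIV. M s t) = 1)"

lemma stochasticD:
  assumes "stochastic M"
  shows stochastic_nonneg: "0 \<le> M s t" and stochastic_row_sum: "(\<Sum>t\<in>UNIV. M s t) = 1"
  using assms by (auto simp: stochastic_def)

lemma stochastic_le_1:
  assumes "stochastic M"
  shows "M s t \<le> 1"
proof -
  have "M s t \<le> (\<Sum>t\<in>UNIV. M s t)"
    by (rule member_le_sum) (auto simp: stochastic_nonneg[OF assms])
  then show ?thesis by (simp add: stochastic_row_sum[OF assms])
qed

fun mat_pow :: "('s::finite \<Rightarrow> 's \<Rightarrow> real) \<Rightarrow> nat \<Rightarrow> 's \<Rightarrow> 's \<Rightarrow> real" where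
  "mat_pow M 0 s t = of_bool (s = t)"
| "mat_pow M (Suc n) s t = (\<Sum>q\<in>UNIV. M s q * mat_pow M n q t)"

lemma mat_pow_add: "mat_pow M (m + n) s t = (\<Sum>q\<in>UNIV. mat_pow M m s q * mat_pow M n q t)"
proof (induction m arbitrary: s)
  case 0
  then show ?case by simp
next
  case (Suc m)
  have "mat_pow M (Suc m + n) s t = (\<Sum>p\<in>UNIV. \<Sum>q\<in>UNIV. M s p * mat_pow M m p q * mat_pow M n q t)"
    using Suc by (simp add: sum_distrib_left mult.assoc)
  also have "\<dots> = (\<Sum>q\<in>UNIV. mat_pow M (Suc m) s q * mat_pow M n q t)"
    by (subst sum.swap) (simp add: sum_distrib_right)
  finally show ?case .
qed

lemma mat_pow_Suc_right: "mat_pow M (Suc n) s t = (\<Sum>q\<in>UNIV. mat_pow M n s q * M q t)"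
  using mat_pow_add[of M n 1 s t] by simp

lemma stochastic_mat_pow:
  assumes "stochastic M"
  shows "stochastic (mat_pow M n)"
  unfolding stochastic_def
proof (induction n)
  case (Suc n)
  have "(\<Sum>t\<in>UNIV. mat_pow M (Suc n) s t) = (\<Sum>q\<in>UNIV. M s q * (\<Sum>t\<in>UNIV. mat_pow M n q t))" for s
    by (simp add: sum_distrib_left, rule sum.swap)
  with Suc show ?case
    by (auto intro!: sum_nonneg simp: stochastic_nonneg[OF assms] stochastic_row_sum[OF assms])
qed simp

text \<open>Stochastic matrices do not expand row distances, so each of the \<open>n\<close> factors adds at
  most \<open>e\<close>.\<close>
lemma mat_pow_row_dist:
  assumes P: "stochastic P" and Q: "stochastic Q"
    and dist: "\<And>s. (\<Sum>t\<in>UNIV. \<bar>P s t - Q s t\<bar>) \<le> e"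
  shows "(\<Sum>t\<in>UNIV. \<bar>mat_pow P n s t - mat_pow Q n s t\<bar>) \<le> real n * e"
proof (induction n arbitrary: s)
  case (Suc n)
  let ?d = "\<lambda>q t. \<bar>mat_pow P n q t - mat_pow Q n q t\<bar>"
  have "\<bar>mat_pow P (Suc n) s t - mat_pow Q (Suc n) s t\<bar>
      \<le> (\<Sum>q\<in>UNIV. P s q * ?d q t) + (\<Sum>q\<in>UNIV. mat_pow Q n q t * \<bar>P s q - Q s q\<bar>)" for t
  proof -
    have "mat_pow P (Suc n) s t - mat_pow Q (Suc n) s t
        = (\<Sum>q\<in>UNIV. P s q * (mat_pow P n q t - mat_pow Q n q t))
          + (\<Sum>q\<in>UNIV. mat_pow Q n q t * (P s q - Q s q))"
      by (simp add: sum.distrib[symmetric] algebra_simps sum_subtractf[symmetric])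
    then have "\<bar>mat_pow P (Suc n) s t - mat_pow Q (Suc n) s t\<bar>
        \<le> \<bar>\<Sum>q\<in>UNIV. P s q * (mat_pow P n q t - mat_pow Q n q t)\<bar>
          + \<bar>\<Sum>q\<in>UNIV. mat_pow Q n q t * (P s q - Q s q)\<bar>"
      by (simp only: abs_triangle_ineq)
    also have "\<dots> \<le> (\<Sum>q\<in>UNIV. P s q * ?d q t) + (\<Sum>q\<in>UNIV. mat_pow Q n q t * \<bar>P s q - Q s q\<bar>)"
      by (intro add_mono abs_sum_weighted_le stochastic_nonneg P stochastic_mat_pow Q)
    finally show ?thesis .
  qed
  then have "(\<Sum>t\<in>UNIV. \<bar>mat_pow P (Suc n) s t - mat_pow Q (Suc n) s t\<bar>)
      \<le> (\<Sum>t\<in>UNIV. \<Sum>q\<in>UNIV. P s q * ?d q t) + (\<Sum>t\<in>UNIV. \<Sum>q\<in>UNIV. mat_pow Q n q t * \<bar>P s q - Q s q\<bar>)"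
    by (subst sum.distrib[symmetric], rule sum_mono)
  also have "\<dots> = (\<Sum>q\<in>UNIV. P s q * (\<Sum>t\<in>UNIV. ?d q t))
      + (\<Sum>q\<in>UNIV. (\<Sum>t\<in>UNIV. mat_pow Q n q t) * \<bar>P s q - Q s q\<bar>)"
    unfolding sum_distrib_left sum_distrib_right by (subst (1 2) sum.swap) (rule refl)
  also have "\<dots> \<le> (\<Sum>q\<in>UNIV. P s q * (real n * e)) + (\<Sum>q\<in>UNIV. \<bar>P s q - Q s q\<bar>)"
    using Suc.IH by (auto intro!: add_mono sum_mono mult_left_mono
        simp: stochastic_nonneg[OF P] stochastic_row_sum[OF stochastic_mat_pow[OF Q]])
  also have "\<dots> \<le> real (Suc n) * e"
    using dist[of s] by (simp add: sum_distrib_right[symmetric] stochastic_row_sum[OF P] distrib_right)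
  finally show ?case .
qed simp

lemma stochastic_limit:
  assumes "\<And>k. stochastic (P k)" and "\<And>s t. (\<lambda>k. P k s t) \<longlonglongrightarrow> M s t"
  shows "stochastic M"
  unfolding stochastic_def
proof (intro conjI allI)
  fix s t
  show "0 \<le> M s t"
    by (rule LIMSEQ_le_const[OF assms(2)]) (simp add: stochastic_nonneg[OF assms(1)])
next
  fix s
  have "(\<lambda>k. \<Sum>t\<in>UNIV. P k s t) \<longlonglongrightarrow> (\<Sum>t\<in>UNIV. M s t)"
    by (intro tendsto_sum assms(2))
  then show "(\<Sum>t\<in>UNIV. M s t) = 1"
    by (simp add: stochastic_row_sum[OF assms(1)] LIMSEQ_const_iff)
qed

lemma eventually_row_dist_le:
  fixes P :: "nat \<Rightarrow> 's::finite \<Rightarrow> 's \<Rightarrow> real"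
  assumes "\<And>s t. (\<lambda>k. P k s t) \<longlonglongrightarrow> M s t" and "0 < e"
  shows "eventually (\<lambda>k. \<forall>s. (\<Sum>t\<in>UNIV. \<bar>P k s t - M s t\<bar>) \<le> e) sequentially"
proof (rule eventually_all_finite)
  fix s
  have "(\<lambda>k. \<Sum>t\<in>UNIV. \<bar>P k s t - M s t\<bar>) \<longlonglongrightarrow> (\<Sum>t\<in>UNIV. \<bar>M s t - M s t\<bar>)"
    by (intro tendsto_sum tendsto_rabs tendsto_diff assms tendsto_const)
  then have "eventually (\<lambda>k. (\<Sum>t\<in>UNIV. \<bar>P k s t - M s t\<bar>) < e) sequentially"
    using \<open>0 < e\<close> by (auto dest: order_tendstoD(2))
  then show "eventually (\<lambda>k. (\<Sum>t\<in>UNIV. \<bar>P k s t - M s t\<bar>) \<le> e) sequentially"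
    by (rule eventually_mono) simp
qed

text \<open>For \<open>k \<ge> f n\<close> the row distance of \<open>P k\<close> to \<open>M\<close> is at most \<open>1/(n+1)\<^sup>2\<close>,
  so the \<open>n\<close>-th powers differ by at most \<open>1/(n+1)\<close>.\<close>
lemma mat_pow_diagonal_tendsto:
  fixes P :: "nat \<Rightarrow> 's::finite \<Rightarrow> 's \<Rightarrow> real"
  assumes P: "\<And>k. stochastic (P k)" and M: "stochastic M"
    and lim: "\<And>s t. (\<lambda>k. P k s t) \<longlonglongrightarrow> M s t"
  obtains f :: "nat \<Rightarrow> nat" where "strict_mono f"
    "\<And>g s t. (\<And>n. f n \<le> g n) \<Longrightarrow> (\<lambda>n. mat_pow (P (g n)) n s t - mat_pow M n s t) \<longlonglongrightarrow> 0"
proof -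
  define eps where "eps n = inverse (real (Suc n)) ^ 2" for n
  define close where "close n k \<longleftrightarrow> (\<forall>s. (\<Sum>t\<in>UNIV. \<bar>P k s t - M s t\<bar>) \<le> eps n)" for n k
  have "eventually (close n) sequentially" for n
    unfolding close_def by (rule eventually_row_dist_le[OF lim]) (simp add: eps_def)
  then obtain f where "strict_mono f" and f: "\<And>n k. f n \<le> k \<Longrightarrow> close n k"
    by (rule strict_mono_eventually_bound[of close]) blast
  show thesis
  proof (rule that[OF \<open>strict_mono f\<close>])
    fix g :: "nat \<Rightarrow> nat" and s t
    assume g: "\<And>n. f n \<le> g n"
    have "\<bar>mat_pow (P (g n)) n s t - mat_pow M n s t\<bar> \<le> inverse (real (Suc n))" for n
    proof -
      have "\<bar>mat_pow (P (g n)) n s t - mat_pow M n s t\<bar>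
          \<le> (\<Sum>t\<in>UNIV. \<bar>mat_pow (P (g n)) n s t - mat_pow M n s t\<bar>)"
        by (rule member_le_sum) auto
      also have "\<dots> \<le> real n * eps n"
        using f[OF g] unfolding close_def by (intro mat_pow_row_dist[OF P M]) blast
      also have "\<dots> \<le> real (Suc n) * eps n"
        by (rule mult_right_mono) (auto simp: eps_def)
      also have "\<dots> = inverse (real (Suc n))"
        by (simp add: eps_def power2_eq_square del: of_nat_Suc)
      finally show ?thesis .
    qed
    then show "(\<lambda>n. mat_pow (P (g n)) n s t - mat_pow M n s t) \<longlonglongrightarrow> 0"
      by (intro Lim_null_comparison[OF _ LIMSEQ_inverse_real_of_nat] always_eventually) simp
  qed
qed

section \<open>Powers of a stochastic matrix with idempotent support\<close>

locale idempotent_chain =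
  fixes M :: "'s::finite \<Rightarrow> 's \<Rightarrow> real" and u :: "'s limit_word"
  assumes stochastic: "stochastic M"
    and support: "\<And>s t. 0 < M s t \<longleftrightarrow> u s t"
    and idempotent: "lw_idempotent u"
begin

lemma nonneg: "0 \<le> M s t"
  using stochastic by (rule stochastic_nonneg)

lemma pow_nonneg: "0 \<le> mat_pow M n s t"
  using stochastic_mat_pow[OF stochastic] by (rule stochastic_nonneg)

lemma pow_le_1: "mat_pow M n s t \<le> 1"
  using stochastic_mat_pow[OF stochastic] by (rule stochastic_le_1)

lemma pow_row_sum: "(\<Sum>t\<in>UNIV. mat_pow M n s t) = 1"
  using stochastic_mat_pow[OF stochastic] by (rule stochastic_row_sum)

lemma ex_mid_iff: "(\<exists>q. u s q \<and> u q t) \<longleftrightarrow> u s t"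
  using fun_cong[OF fun_cong[OF idempotent[unfolded lw_idempotent_def]], of s t]
  by (simp add: lw_concat_def)

lemma u_trans: "u s q \<Longrightarrow> u q t \<Longrightarrow> u s t"
  using ex_mid_iff by blast

lemma M_eq_0: "\<not> u s t \<Longrightarrow> M s t = 0"
  using support[of s t] nonneg[of s t] by simp

lemma pow_pos_iff: "0 < mat_pow M (Suc n) s t \<longleftrightarrow> u s t"
proof (induction n arbitrary: s)
  case 0
  then show ?case by (simp add: support)
next
  case (Suc n)
  have "0 < mat_pow M (Suc (Suc n)) s t \<longleftrightarrow> (\<exists>q\<in>UNIV. 0 < M s q * mat_pow M (Suc n) q t)"
    unfolding mat_pow.simps(2)[of M "Suc n"]
    by (rule sum_pos_iff_ex_pos) (simp, intro mult_nonneg_nonneg nonneg pow_nonneg)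
  also have "\<dots> \<longleftrightarrow> (\<exists>q. u s q \<and> u q t)"
    by (simp add: nonneg_mult_pos_iff nonneg pow_nonneg support Suc.IH del: mat_pow.simps(2))
  finally show ?case
    by (simp add: ex_mid_iff)
qed

lemma pow_eq_0: "\<not> u s t \<Longrightarrow> s \<noteq> t \<Longrightarrow> mat_pow M n s t = 0"
  using pow_pos_iff[of "n - 1" s t] pow_nonneg[of n s t] by (cases n) auto

lemma ex_successor: "\<exists>t. u s t"
proof (rule ccontr)
  assume "\<nexists>t. u s t"
  then have "(\<Sum>t\<in>UNIV. M s t) = 0"
    by (simp add: M_eq_0)
  then show False
    using stochastic_row_sum[OF stochastic, of s] by simp
qed

lemma recurrent_refl: "lw_recurrent u t \<Longrightarrow> u t t"
  using ex_successor[of t] u_trans unfolding lw_recurrent_def by blast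

lemma recurrent_closed: "lw_recurrent u r \<Longrightarrow> u r q \<Longrightarrow> lw_recurrent u q"
  unfolding lw_recurrent_def using u_trans by blast

text \<open>Leaving a state for good is a well-founded relation, because \<open>u\<close> is transitive on a
  finite type; following it ends in a recurrent state.\<close>
lemma ex_recurrent_successor: "\<exists>r. u s r \<and> lw_recurrent u r"
proof -
  let ?R = "{(y, x). u x y \<and> \<not> u y x}"
  have "wf ?R"
  proof (rule finite_acyclic_wf)
    have "Relation.trans ?R"
      unfolding Relation.trans_def using u_trans by blast
    then show "acyclic ?R"
      unfolding acyclic_def by (simp add: trancl_id)
  qed simp
  then show ?thesis
  proof (induction s rule: wf_induct_rule)
    case (less s)
    show ?case
    proof (cases "lw_recurrent u s")
      case True
      then show ?thesis using recurrent_refl by blast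
    next
      case False
      then obtain y where "u s y" "\<not> u y s"
        unfolding lw_recurrent_def by blast
      with less obtain r where "u y r" "lw_recurrent u r"
        by blast
      with \<open>u s y\<close> show ?thesis
        using u_trans by blast
    qed
  qed
qed

definition transient :: "'s set" where
  "transient = {q. \<not> lw_recurrent u q}"

definition transient_mass :: "nat \<Rightarrow> 's \<Rightarrow> real" where
  "transient_mass n s = (\<Sum>q\<in>transient. mat_pow M n s q)"

lemma row_sum_transient_lt_1: "(\<Sum>q\<in>transient. M p q) < 1"
proof -
  obtain r where r: "u p r" "lw_recurrent u r"
    using ex_recurrent_successor by blast
  then have "0 < (\<Sum>q\<in>-transient. M p q)"
    by (subst sum_pos_iff_ex_pos) (auto simp: transient_def support nonneg)
  moreover have "(\<Sum>q\<in>-transient. M p q) + (\<Sum>q\<in>transient. M p q) = 1"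
    using sum.subset_diff[of transient UNIV "M p"] stochastic_row_sum[OF stochastic]
    by (simp add: Compl_eq_Diff_UNIV)
  ultimately show ?thesis
    by linarith
qed

lemma recurrent_row_sum_transient:
  assumes "p \<notin> transient"
  shows "(\<Sum>q\<in>transient. M p q) = 0"
  using assms recurrent_closed by (auto intro!: sum.neutral M_eq_0 simp: transient_def)

lemma transient_mass_LIMSEQ: "(\<lambda>n. transient_mass n s) \<longlonglongrightarrow> 0"
proof -
  define c where "c = Max (insert 0 ((\<lambda>p. \<Sum>q\<in>transient. M p q) ` transient))"
  have "0 \<le> c" "c < 1"
    unfolding c_def by (auto simp: row_sum_transient_lt_1)
  have row: "(\<Sum>q\<in>transient. M p q) \<le> (if p \<in> transient then c else 0)" for p
    by (auto simp: c_def recurrent_row_sum_transient)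
  have step: "transient_mass (Suc n) s \<le> c * transient_mass n s" for n s
  proof -
    have "transient_mass (Suc n) s = (\<Sum>p\<in>UNIV. mat_pow M n s p * (\<Sum>q\<in>transient. M p q))"
      unfolding transient_mass_def mat_pow_Suc_right sum_distrib_left by (rule sum.swap)
    also have "\<dots> \<le> (\<Sum>p\<in>UNIV. mat_pow M n s p * (if p \<in> transient then c else 0))"
      by (intro sum_mono mult_left_mono row pow_nonneg)
    also have "\<dots> = c * transient_mass n s"
      by (simp add: transient_mass_def if_distrib sum.If_cases sum_distrib_left mult.commute)
    finally show ?thesis .
  qed
  have "transient_mass n s \<le> c ^ n" for n
  proof (induction n arbitrary: s)
    case 0
    show ?case
      using sum_mono2[of UNIV transient "mat_pow M 0 s"] pow_nonneg pow_row_sum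
      by (simp add: transient_mass_def)
  next
    case (Suc n)
    then show ?case
      using order_trans[OF step mult_left_mono[OF Suc.IH \<open>0 \<le> c\<close>]] by simp
  qed
  moreover have "0 \<le> transient_mass n s" for n
    unfolding transient_mass_def by (intro sum_nonneg pow_nonneg)
  ultimately show ?thesis
    by (intro Lim_null_comparison[OF _ LIMSEQ_realpow_zero[OF \<open>0 \<le> c\<close> \<open>c < 1\<close>]] always_eventually) simp
qed

lemma pow_LIMSEQ_transient:
  assumes "t \<in> transient"
  shows "(\<lambda>n. mat_pow M n s t) \<longlonglongrightarrow> 0"
proof (rule Lim_null_comparison[OF always_eventually transient_mass_LIMSEQ])
  show "\<forall>n. norm (mat_pow M n s t) \<le> transient_mass n s"
    using assms by (auto simp: transient_mass_def pow_nonneg intro!: member_le_sum)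
qed

definition recurrent_class :: "'s \<Rightarrow> 's set" where
  "recurrent_class t = {r. u t r}"

definition col_min :: "'s \<Rightarrow> nat \<Rightarrow> real" where
  "col_min t n = Min ((\<lambda>r. mat_pow M n r t) ` recurrent_class t)"

definition col_max :: "'s \<Rightarrow> nat \<Rightarrow> real" where
  "col_max t n = Max ((\<lambda>r. mat_pow M n r t) ` recurrent_class t)"

lemma class_closed: "r \<in> recurrent_class t \<Longrightarrow> u r q \<Longrightarrow> q \<in> recurrent_class t"
  using u_trans by (auto simp: recurrent_class_def)

lemma M_eq_0_leaving_class: "r \<in> recurrent_class t \<Longrightarrow> q \<notin> recurrent_class t \<Longrightarrow> M r q = 0"
  using class_closed M_eq_0 by blast

lemma class_row_sum: "r \<in> recurrent_class t \<Longrightarrow> (\<Sum>q\<in>recurrent_class t. M r q) = 1"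
  using sum.mono_neutral_left[of UNIV "recurrent_class t" "M r"] stochastic_row_sum[OF stochastic]
  by (simp add: M_eq_0_leaving_class)

lemma pow_Suc_in_class:
  assumes "r \<in> recurrent_class t"
  shows "mat_pow M (Suc n) r x = (\<Sum>q\<in>recurrent_class t. M r q * mat_pow M n q x)"
  using assms by (auto intro!: sum.mono_neutral_right simp: M_eq_0_leaving_class)

context
  fixes t
  assumes recurrent: "lw_recurrent u t"
begin

lemma class_self: "t \<in> recurrent_class t"
  using recurrent_refl[OF recurrent] by (simp add: recurrent_class_def)

lemma class_reaches: "r \<in> recurrent_class t \<Longrightarrow> u r t"
  using recurrent by (simp add: recurrent_class_def lw_recurrent_def)

lemma class_connected: "r \<in> recurrent_class t \<Longrightarrow> q \<in> recurrent_class t \<Longrightarrow> u r q"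
  using class_reaches u_trans by (auto simp: recurrent_class_def)

lemma col_min_le: "r \<in> recurrent_class t \<Longrightarrow> col_min t n \<le> mat_pow M n r t"
  unfolding col_min_def by (rule Min_le) auto

lemma le_col_max: "r \<in> recurrent_class t \<Longrightarrow> mat_pow M n r t \<le> col_max t n"
  unfolding col_max_def by (rule Max_ge) auto

lemma col_min_attained: "\<exists>r\<in>recurrent_class t. mat_pow M n r t = col_min t n"
proof -
  have "col_min t n \<in> (\<lambda>r. mat_pow M n r t) ` recurrent_class t"
    unfolding col_min_def using class_self by (intro Min_in) auto
  then show ?thesis
    by auto
qed

lemma col_max_attained: "\<exists>r\<in>recurrent_class t. mat_pow M n r t = col_max t n"
proof -
  have "col_max t n \<in> (\<lambda>r. mat_pow M n r t) ` recurrent_class t"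
    unfolding col_max_def using class_self by (intro Max_in) auto
  then show ?thesis
    by auto
qed

lemma ex_class_lower_bound: "\<exists>e>0. \<forall>r\<in>recurrent_class t. \<forall>q\<in>recurrent_class t. e \<le> M r q"
proof -
  let ?E = "(\<lambda>(r, q). M r q) ` (recurrent_class t \<times> recurrent_class t)"
  have "0 < Min ?E"
    using class_self class_connected by (subst Min_gr_iff) (auto simp: support)
  moreover have "\<forall>r\<in>recurrent_class t. \<forall>q\<in>recurrent_class t. Min ?E \<le> M r q"
    by (auto intro: Min_le)
  ultimately show ?thesis
    by blast
qed

text \<open>Doeblin's argument: every step mixes the column of \<open>t\<close> over the class with weights at
  least \<open>e\<close>, so its spread shrinks by the factor \<open>1 - 2e\<close>.\<close>
lemma col_bounds_Suc:
  assumes e: "\<And>r q. r \<in> recurrent_class t \<Longrightarrow> q \<in> recurrent_class t \<Longrightarrow> e \<le> M r q"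
  shows "col_min t n + e * (col_max t n - col_min t n) \<le> col_min t (Suc n)"
    and "col_max t (Suc n) \<le> col_max t n - e * (col_max t n - col_min t n)"
proof -
  obtain qlo where lo: "qlo \<in> recurrent_class t" "mat_pow M n qlo t = col_min t n"
    using col_min_attained by blast
  obtain qhi where hi: "qhi \<in> recurrent_class t" "mat_pow M n qhi t = col_max t n"
    using col_max_attained by blast
  have bounds: "col_min t n + e * (col_max t n - col_min t n) \<le> mat_pow M (Suc n) r t"
    "mat_pow M (Suc n) r t \<le> col_max t n - e * (col_max t n - col_min t n)"
    if "r \<in> recurrent_class t" for r
    unfolding pow_Suc_in_class[OF that]
    by (rule weighted_average_bounds[where qlo=qlo and qhi=qhi];
        use lo hi that e in \<open>auto simp: nonneg class_row_sum col_min_le le_col_max\<close>)+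
  show "col_min t n + e * (col_max t n - col_min t n) \<le> col_min t (Suc n)"
    unfolding col_min_def[of t "Suc n"] using bounds(1) class_self by (auto intro: Min.boundedI)
  show "col_max t (Suc n) \<le> col_max t n - e * (col_max t n - col_min t n)"
    unfolding col_max_def[of t "Suc n"] using bounds(2) class_self by (auto intro: Max.boundedI)
qed

lemma col_min_nonneg: "0 \<le> col_min t n"
  using col_min_attained pow_nonneg by metis

lemma col_max_le_1: "col_max t n \<le> 1"
  using col_max_attained pow_le_1 by metis

lemma col_spread_nonneg: "0 \<le> col_max t n - col_min t n"
  using order_trans[OF col_min_le[OF class_self] le_col_max[OF class_self]] by simp

lemma col_spread_LIMSEQ: "(\<lambda>n. col_max t n - col_min t n) \<longlonglongrightarrow> 0"
proof -
  obtain e where "0 < e" and lower: "\<And>r q. r \<in> recurrent_class t \<Longrightarrow> q \<in> recurrent_class t \<Longrightarrow> e \<le> M r q"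
    using ex_class_lower_bound by blast
  define c where "c = max 0 (1 - 2 * e)"
  have "0 \<le> c" "c < 1"
    using \<open>0 < e\<close> by (auto simp: c_def)
  have "col_max t n - col_min t n \<le> c ^ n" for n
  proof (induction n)
    case 0
    then show ?case
      using col_max_le_1[of 0] col_min_nonneg[of 0] by simp
  next
    case (Suc n)
    have "col_min t n + e * (col_max t n - col_min t n) \<le> col_min t (Suc n)"
      by (rule col_bounds_Suc(1)) (rule lower)
    moreover have "col_max t (Suc n) \<le> col_max t n - e * (col_max t n - col_min t n)"
      by (rule col_bounds_Suc(2)) (rule lower)
    ultimately have "col_max t (Suc n) - col_min t (Suc n) \<le> (1 - 2 * e) * (col_max t n - col_min t n)"
      by (simp add: algebra_simps)
    also have "\<dots> \<le> c * (col_max t n - col_min t n)"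
      unfolding c_def by (intro mult_right_mono col_spread_nonneg) simp
    also have "\<dots> \<le> c ^ Suc n"
      using mult_left_mono[OF Suc.IH \<open>0 \<le> c\<close>] by simp
    finally show ?case .
  qed
  then show ?thesis
    by (intro Lim_null_comparison[OF _ LIMSEQ_realpow_zero[OF \<open>0 \<le> c\<close> \<open>c < 1\<close>]] always_eventually)
      (simp add: abs_of_nonneg[OF col_spread_nonneg])
qed

lemma col_min_incseq: "incseq (col_min t)"
proof -
  obtain e where "0 < e" and lower: "\<And>r q. r \<in> recurrent_class t \<Longrightarrow> q \<in> recurrent_class t \<Longrightarrow> e \<le> M r q"
    using ex_class_lower_bound by blast
  have "col_min t n + e * (col_max t n - col_min t n) \<le> col_min t (Suc n)" for n
    by (rule col_bounds_Suc(1)) (rule lower)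
  moreover have "0 \<le> e * (col_max t n - col_min t n)" for n
    using \<open>0 < e\<close> col_spread_nonneg by simp
  ultimately have "col_min t n \<le> col_min t (Suc n)" for n
    by (meson add_increasing2 order_trans order_refl)
  then show ?thesis
    by (rule incseq_SucI)
qed

lemma class_LIMSEQ: "\<exists>p>0. \<forall>r\<in>recurrent_class t. (\<lambda>n. mat_pow M n r t) \<longlonglongrightarrow> p"
proof -
  have "col_min t n \<le> 1" for n
    using col_spread_nonneg[of n] col_max_le_1[of n] by linarith
  then obtain p where min_lim: "col_min t \<longlonglongrightarrow> p" and "\<forall>n. col_min t n \<le> p"
    using incseq_convergent[OF col_min_incseq] by blast
  have max_lim: "col_max t \<longlonglongrightarrow> p"
    using tendsto_add[OF min_lim col_spread_LIMSEQ] by simp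
  obtain r where "r \<in> recurrent_class t" "mat_pow M 1 r t = col_min t 1"
    using col_min_attained by blast
  then have "0 < col_min t 1"
    using pow_pos_iff[of 0 r t] class_reaches by simp
  with \<open>\<forall>n. col_min t n \<le> p\<close> have "0 < p"
    by (meson less_le_trans)
  moreover have "(\<lambda>n. mat_pow M n r t) \<longlonglongrightarrow> p" if "r \<in> recurrent_class t" for r
    using col_min_le[OF that] le_col_max[OF that]
    by (intro tendsto_sandwich[OF _ _ min_lim max_lim] always_eventually) auto
  ultimately show ?thesis
    by blast
qed

lemma pow_eq_0_from_other_class:
  assumes "lw_recurrent u q" and "q \<notin> recurrent_class t"
  shows "mat_pow M k q t = 0"
proof (rule pow_eq_0)
  show "\<not> u q t"
    using assms by (auto simp: lw_recurrent_def recurrent_class_def)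
  show "q \<noteq> t"
    using assms(2) class_self by blast
qed

lemma class_mass_incseq: "incseq (\<lambda>m. \<Sum>q\<in>recurrent_class t. mat_pow M m s q)"
proof (rule incseq_SucI)
  fix m
  let ?C = "recurrent_class t"
  have "(\<Sum>r\<in>?C. mat_pow M m s r) = (\<Sum>r\<in>?C. mat_pow M m s r * (\<Sum>q\<in>?C. M r q))"
    by (simp add: class_row_sum)
  also have "\<dots> \<le> (\<Sum>r\<in>UNIV. mat_pow M m s r * (\<Sum>q\<in>?C. M r q))"
    by (intro sum_mono2 mult_nonneg_nonneg sum_nonneg pow_nonneg nonneg) auto
  also have "\<dots> = (\<Sum>q\<in>?C. mat_pow M (Suc m) s q)"
    unfolding mat_pow_Suc_right sum_distrib_left by (rule sum.swap)
  finally show "(\<Sum>q\<in>?C. mat_pow M m s q) \<le> (\<Sum>q\<in>?C. mat_pow M (Suc m) s q)" .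
qed

text \<open>After \<open>m\<close> steps the walk is either still transient or has entered a recurrent class;
  only the class of \<open>t\<close> leads to \<open>t\<close>, and inside it \<open>k\<close> more steps give roughly \<open>p\<close>.\<close>
lemma pow_add_approx:
  "\<bar>mat_pow M (m + k) s t - (\<Sum>q\<in>recurrent_class t. mat_pow M m s q) * p\<bar>
     \<le> (\<Sum>q\<in>recurrent_class t. \<bar>mat_pow M k q t - p\<bar>) + transient_mass m s"
proof -
  let ?C = "recurrent_class t"
  let ?f = "\<lambda>q. mat_pow M m s q * mat_pow M k q t"
  have split: "mat_pow M (m + k) s t = (\<Sum>q\<in>?C. ?f q) + (\<Sum>q\<in>-?C. ?f q)"
    unfolding mat_pow_add using sum.subset_diff[of ?C UNIV ?f] by (simp add: Compl_eq_Diff_UNIV)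
  have "\<bar>(\<Sum>q\<in>?C. ?f q) - (\<Sum>q\<in>?C. mat_pow M m s q) * p\<bar>
      = \<bar>\<Sum>q\<in>?C. mat_pow M m s q * (mat_pow M k q t - p)\<bar>"
    by (simp add: sum_distrib_right right_diff_distrib sum_subtractf)
  also have "\<dots> \<le> (\<Sum>q\<in>?C. mat_pow M m s q * \<bar>mat_pow M k q t - p\<bar>)"
    by (rule abs_sum_weighted_le) (rule pow_nonneg)
  also have "\<dots> \<le> (\<Sum>q\<in>?C. \<bar>mat_pow M k q t - p\<bar>)"
    using pow_le_1 pow_nonneg by (intro sum_mono mult_left_le_one_le) auto
  finally have inside: "\<bar>(\<Sum>q\<in>?C. ?f q) - (\<Sum>q\<in>?C. mat_pow M m s q) * p\<bar>
      \<le> (\<Sum>q\<in>?C. \<bar>mat_pow M k q t - p\<bar>)" .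
  have "?f q \<le> of_bool (q \<in> transient) * mat_pow M m s q" if "q \<in> -?C" for q
    using that pow_eq_0_from_other_class[of q k] mult_left_le[OF pow_le_1 pow_nonneg]
    by (cases "q \<in> transient") (auto simp: transient_def)
  then have "(\<Sum>q\<in>-?C. ?f q) \<le> (\<Sum>q\<in>-?C. of_bool (q \<in> transient) * mat_pow M m s q)"
    by (rule sum_mono)
  also have "\<dots> \<le> (\<Sum>q\<in>UNIV. of_bool (q \<in> transient) * mat_pow M m s q)"
    by (intro sum_mono2 mult_nonneg_nonneg pow_nonneg) auto
  also have "\<dots> = transient_mass m s"
    by (simp add: transient_mass_def)
  finally have outside: "(\<Sum>q\<in>-?C. ?f q) \<le> transient_mass m s" .
  have "0 \<le> (\<Sum>q\<in>-?C. ?f q)"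
    by (intro sum_nonneg mult_nonneg_nonneg pow_nonneg)
  with split inside outside show ?thesis
    by linarith
qed

text \<open>Split \<open>n\<close> steps into two halves: the first half settles the mass in the class of \<open>t\<close>,
  the second lets it converge inside the class.\<close>
lemma pow_LIMSEQ_class_mass:
  assumes p: "\<And>r. r \<in> recurrent_class t \<Longrightarrow> (\<lambda>n. mat_pow M n r t) \<longlonglongrightarrow> p"
    and H: "(\<lambda>m. \<Sum>q\<in>recurrent_class t. mat_pow M m s q) \<longlonglongrightarrow> H"
  shows "(\<lambda>n. mat_pow M n s t) \<longlonglongrightarrow> H * p"
proof -
  let ?C = "recurrent_class t"
  define h where "h m = (\<Sum>q\<in>?C. mat_pow M m s q)" for m
  define R where "R n = (\<Sum>q\<in>?C. \<bar>mat_pow M (n - n div 2) q t - p\<bar>) + transient_mass (n div 2) s" for n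
  have half: "filterlim (\<lambda>n::nat. n div 2) at_top at_top"
    by (simp add: filterlim_at_top_div_const_nat)
  moreover have "filterlim (\<lambda>n::nat. n - n div 2) at_top at_top"
    by (rule filterlim_at_top_mono[OF half], intro always_eventually allI) presburger
  ultimately have "R \<longlonglongrightarrow> (\<Sum>q\<in>?C. \<bar>p - p\<bar>) + 0"
    unfolding R_def
    by (intro tendsto_add tendsto_sum tendsto_rabs tendsto_diff tendsto_const
        filterlim_compose[OF p] filterlim_compose[OF transient_mass_LIMSEQ])
  then have R_lim: "R \<longlonglongrightarrow> 0"
    by simp
  have bound: "\<bar>mat_pow M n s t - h (n div 2) * p\<bar> \<le> R n" for n
    using pow_add_approx[of "n div 2" "n - n div 2" s p] by (simp add: h_def R_def)
  have "(\<lambda>n. mat_pow M n s t - h (n div 2) * p) \<longlonglongrightarrow> 0"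
    by (rule Lim_null_comparison[OF _ R_lim]) (simp add: bound always_eventually)
  moreover have "(\<lambda>n. h (n div 2) * p) \<longlonglongrightarrow> H * p"
    unfolding h_def by (intro tendsto_mult tendsto_const filterlim_compose[OF H half])
  ultimately show ?thesis
    using tendsto_add by fastforce
qed

lemma pow_LIMSEQ_recurrent: "\<exists>l. (\<lambda>n. mat_pow M n s t) \<longlonglongrightarrow> l \<and> (0 < l \<longleftrightarrow> u s t)"
proof -
  let ?C = "recurrent_class t"
  obtain p where "0 < p" and p: "\<And>r. r \<in> ?C \<Longrightarrow> (\<lambda>n. mat_pow M n r t) \<longlonglongrightarrow> p"
    using class_LIMSEQ by blast
  define h where "h m = (\<Sum>q\<in>?C. mat_pow M m s q)" for m
  have "h m \<le> 1" for m
    using sum_mono2[of UNIV ?C "mat_pow M m s"] pow_nonneg pow_row_sum by (simp add: h_def)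
  then obtain H where H: "h \<longlonglongrightarrow> H" and "\<forall>m. h m \<le> H"
    using incseq_convergent[OF class_mass_incseq[of s]] unfolding h_def by blast
  have lim: "(\<lambda>n. mat_pow M n s t) \<longlonglongrightarrow> H * p"
    using p H unfolding h_def by (rule pow_LIMSEQ_class_mass)
  have "0 < H \<longleftrightarrow> u s t"
  proof
    assume "u s t"
    then have "0 < mat_pow M 1 s t"
      using pow_pos_iff[of 0] by simp
    also have "\<dots> \<le> h 1"
      unfolding h_def using class_self by (intro member_le_sum pow_nonneg) simp_all
    also have "\<dots> \<le> H"
      using \<open>\<forall>m. h m \<le> H\<close> by blast
    finally show "0 < H" .
  next
    assume "0 < H"
    show "u s t"
    proof (rule ccontr)
      assume "\<not> u s t"
      moreover have "s \<noteq> t"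
        using calculation recurrent_refl[OF recurrent] by blast
      ultimately have "(\<lambda>n. mat_pow M n s t) \<longlonglongrightarrow> 0"
        by (simp add: pow_eq_0)
      with lim \<open>0 < H\<close> \<open>0 < p\<close> show False
        using LIMSEQ_unique by fastforce
    qed
  qed
  with lim \<open>0 < p\<close> show ?thesis
    by (auto simp: zero_less_mult_iff)
qed

end

lemma pow_LIMSEQ: "\<exists>l. (\<lambda>n. mat_pow M n s t) \<longlonglongrightarrow> l \<and> (0 < l \<longleftrightarrow> lw_sharp u s t)"
proof (cases "lw_recurrent u t")
  case True
  then show ?thesis
    using pow_LIMSEQ_recurrent[OF True, of s] by (simp add: lw_sharp_def)
next
  case False
  then show ?thesis
    using pow_LIMSEQ_transient[of t s] by (auto simp: lw_sharp_def transient_def)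
qed

end

section \<open>Reification\<close>

lemma path_prob_append:
  "path_prob A s (xs @ ys) t = (\<Sum>q\<in>UNIV. path_prob A s xs q * path_prob A q ys t)"
proof (induction xs arbitrary: s)
  case Nil
  have "path_prob A s [] q = of_bool (s = q)" for q
    by simp
  then show ?case
    by simp
next
  case (Cons a xs)
  have "path_prob A s ((a # xs) @ ys) t
      = (\<Sum>p\<in>UNIV. \<Sum>q\<in>UNIV. pmf (trans A s a) p * path_prob A p xs q * path_prob A q ys t)"
    using Cons by (simp add: sum_distrib_left mult.assoc)
  also have "\<dots> = (\<Sum>q\<in>UNIV. path_prob A s (a # xs) q * path_prob A q ys t)"
    by (subst sum.swap) (simp add: sum_distrib_right)
  finally show ?case .
qed

lemma stochastic_path_prob: "stochastic (\<lambda>s t. path_prob A s w t)"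
  unfolding stochastic_def
proof (induction w)
  case (Cons a w)
  have "(\<Sum>t\<in>UNIV. path_prob A s (a # w) t)
      = (\<Sum>q\<in>UNIV. pmf (trans A s a) q * (\<Sum>t\<in>UNIV. path_prob A q w t))" for s
    by (simp add: sum_distrib_left, rule sum.swap)
  with Cons show ?case
    by (auto intro!: sum_nonneg sum_pmf_eq_1)
qed simp

lemma path_prob_word_pow:
  "path_prob A s (word_pow w n) t = mat_pow (\<lambda>s t. path_prob A s w t) n s t"
  by (induction n arbitrary: s) (simp_all add: word_pow_def path_prob_append)

lemma reifies_LIMSEQ:
  assumes "reifies A w lw"
  shows "(\<lambda>n. path_prob A s (w n) t) \<longlonglongrightarrow> lim (\<lambda>n. path_prob A s (w n) t)"
  using assms by (simp add: reifies_def convergent_LIMSEQ_iff)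

lemma reifies_lim_nonneg:
  assumes "reifies A w lw"
  shows "0 \<le> lim (\<lambda>n. path_prob A s (w n) t)"
  by (rule LIMSEQ_le_const[OF reifies_LIMSEQ[OF assms]])
    (simp add: stochastic_nonneg[OF stochastic_path_prob])

lemma reifies_append:
  assumes u: "reifies A us u" and v: "reifies A vs v"
  shows "reifies A (\<lambda>n. us n @ vs n) (lw_concat u v)"
  unfolding reifies_def
proof (intro allI conjI)
  fix s t
  define a where "a q = lim (\<lambda>n. path_prob A s (us n) q)" for q
  define b where "b q = lim (\<lambda>n. path_prob A q (vs n) t)" for q
  have lim: "(\<lambda>n. path_prob A s (us n @ vs n) t) \<longlonglongrightarrow> (\<Sum>q\<in>UNIV. a q * b q)"
    unfolding path_prob_append a_def b_def
    by (intro tendsto_sum tendsto_mult reifies_LIMSEQ[OF u] reifies_LIMSEQ[OF v])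
  then show "convergent (\<lambda>n. path_prob A s (us n @ vs n) t)"
    by (auto simp: convergent_def)
  have ab: "0 \<le> a q" "0 \<le> b q" for q
    unfolding a_def b_def by (intro reifies_lim_nonneg[OF u] reifies_lim_nonneg[OF v])+
  then have "0 < (\<Sum>q\<in>UNIV. a q * b q) \<longleftrightarrow> (\<exists>q. 0 < a q * b q)"
    by (simp add: sum_pos_iff_ex_pos)
  also have "\<dots> \<longleftrightarrow> (\<exists>q. 0 < a q \<and> 0 < b q)"
    using ab by (simp add: nonneg_mult_pos_iff)
  also have "\<dots> \<longleftrightarrow> lw_concat u v s t"
    using u v unfolding reifies_def lw_concat_def a_def b_def by auto
  finally show "lw_concat u v s t \<longleftrightarrow> 0 < lim (\<lambda>n. path_prob A s (us n @ vs n) t)"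
    using limI[OF lim] by simp
qed

lemma reifies_word_pow_diagonal:
  fixes A :: "('s::finite, 'a) prob_automaton"
  assumes reif: "reifies A us u" and idem: "lw_idempotent u"
  obtains f :: "nat \<Rightarrow> nat" where "strict_mono f"
    "\<And>g. (\<And>n. f n \<le> g n) \<Longrightarrow> reifies A (\<lambda>n. word_pow (us (g n)) n) (lw_sharp u)"
proof -
  define P where "P k s t = path_prob A s (us k) t" for k s t
  define M where "M s t = lim (\<lambda>k. P k s t)" for s t
  have P_lim: "(\<lambda>k. P k s t) \<longlonglongrightarrow> M s t" for s t
    unfolding P_def M_def by (rule reifies_LIMSEQ[OF reif])
  have P: "stochastic (P k)" for k
    unfolding P_def by (rule stochastic_path_prob)
  have M: "stochastic M"
    using P P_lim by (rule stochastic_limit)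
  interpret idempotent_chain M u
    using M idem reif by unfold_locales (auto simp: M_def P_def reifies_def)
  obtain f where "strict_mono f" and f: "\<And>g s t. (\<And>n. f n \<le> g n) \<Longrightarrow>
      (\<lambda>n. mat_pow (P (g n)) n s t - mat_pow M n s t) \<longlonglongrightarrow> 0"
    using mat_pow_diagonal_tendsto[OF P M P_lim] by blast
  show thesis
  proof (rule that[OF \<open>strict_mono f\<close>])
    fix g
    assume g: "\<And>n. f n \<le> g n"
    show "reifies A (\<lambda>n. word_pow (us (g n)) n) (lw_sharp u)"
      unfolding reifies_def
    proof (intro allI)
      fix s t
      obtain l where l: "(\<lambda>n. mat_pow M n s t) \<longlonglongrightarrow> l" "0 < l \<longleftrightarrow> lw_sharp u s t"
        using pow_LIMSEQ by blast
      have "(\<lambda>n. path_prob A s (word_pow (us (g n)) n) t) \<longlonglongrightarrow> l"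
        using tendsto_add[OF f[OF g, of s t] l(1)]
        by (simp add: path_prob_word_pow P_def[abs_def])
      then show "convergent (\<lambda>n. path_prob A s (word_pow (us (g n)) n) t) \<and>
          (lw_sharp u s t \<longleftrightarrow> 0 < lim (\<lambda>n. path_prob A s (word_pow (us (g n)) n) t))"
        using l(2) by (auto simp: convergent_def limI)
    qed
  qed
qed

theorem proposition2p11:
  fixes A :: "('s::finite, 'a::finite) prob_automaton"
    and us vs :: "nat \<Rightarrow> 'a list"
    and u v :: "'s limit_word"
  assumes "is_limit_word u" and "is_limit_word v"
    and "reifies A us u" and "reifies A vs v"
  shows "reifies A (\<lambda>n. us n @ vs n) (lw_concat u v) \<and>
         (lw_idempotent u \<longrightarrow>
           (\<exists>f. strict_mono f \<and>
               (\<forall>g. strict_mono g \<and> (\<forall>n. f n \<le> g n) \<longrightarrow>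
                    reifies A (\<lambda>n. word_pow (us (g n)) n) (lw_sharp u))))"
proof (intro conjI impI)
  show "reifies A (\<lambda>n. us n @ vs n) (lw_concat u v)"
    using assms(3,4) by (rule reifies_append)
  assume "lw_idempotent u"
  with assms(3) obtain f where "strict_mono f"
    and "\<And>g. (\<And>n. f n \<le> g n) \<Longrightarrow> reifies A (\<lambda>n. word_pow (us (g n)) n) (lw_sharp u)"
    by (rule reifies_word_pow_diagonal) blast
  then show "\<exists>f. strict_mono f \<and>
      (\<forall>g. strict_mono g \<and> (\<forall>n. f n \<le> g n) \<longrightarrow>
           reifies A (\<lambda>n. word_pow (us (g n)) n) (lw_sharp u))"
    by blast
qed

end
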